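(* Let $f_1,\dots,f_m\in\mathbb{C}[x_1,\dots,x_n]$ with $r$ solutions, and suppose a sparse-resultant solver is given by a square matrix $$\mathbf{M}(u_0)=\begin{bmatrix}\hat{\mathbf{A}}_{11}&\hat{\mathbf{A}}_{12}\\ \mathbf{A}_{21}-u_0\mathbf{I}&\mathbf{A}_{22}\end{bmatrix}$$ as described in the context, with $\hat{\mathbf{A}}_{12}$ square invertible, $|B_1|=r$, and Schur complement $\mathbf{X}=\mathbf{A}_{21}-\mathbf{A}_{22}\hat{\mathbf{A}}_{12}^{-1}\hat{\mathbf{A}}_{11}$. Define an action-matrix solver for the action polynomial $f=x_1$ by taking the basis monomials $B_a=B_1$, the reducible monomials $B_r=\{x_1\mathbf{x}^{\beta}\mid \mathbf{x}^{\beta}\in B_1\}\setminus B_1$, the excess monomials $B_e=B_2\setminus B_r$, the same monomial multiples for $f_1,\dots,f_m$ as in the resultant construction, the same monomial ordering, and the elimination template $\hat{\mathbf{C}}=\begin{bmatrix}\hat{\mathbf{A}}_{12}&\hat{\mathbf{A}}_{11}\end{bmatrix}$ (columns indexed by $\mathbf{b}_2$ then $\mathbf{b}_1$). Let $\mathbf{M}_f$ be the resulting action matrix. Then the two solvers are equivalent: the Gauss–Jordan form of $\hat{\mathbf{C}}$ is $\begin{bmatrix}\mathbf{I}&\hat{\mathbf{A}}_{12}^{-1}\hat{\mathbf{A}}_{11}\end{bmatrix}$, so the Gauss–Jordan elimination can be replaced by the product $\hat{\mathbf{A}}_{12}^{-1}\hat{\mathbf{A}}_{11}$, and $\mathbf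{M}_f=\mathbf{X}$.
   Context: Setting of the sparse-resultant solver: $B=B_1\sqcup B_2$ is a finite set of monomials in $x_1,\dots,x_n$ with $B_1=\{\mathbf{x}^{\beta}\in B\mid x_1\mathbf{x}^{\beta}\in B\}$, ordered as vectors $\mathbf{b}_1=(\mathbf{x}^{\beta_1},\dots,\mathbf{x}^{\beta_r})$ and $\mathbf{b}_2$; the columns of $\mathbf{M}(u_0)$ are indexed by $\mathbf{b}_1$ followed by $\mathbf{b}_2$. The upper block $\begin{bmatrix}\hat{\mathbf{A}}_{11}&\hat{\mathbf{A}}_{12}\end{bmatrix}$ consists of coefficient vectors of polynomials $t f_i$ ($i\le m$, $t$ in chosen sets $T_i$ of monomials), and the $j$-th row of the lower block $\begin{bmatrix}\mathbf{A}_{21}-u_0\mathbf{I}&\mathbf{A}_{22}\end{bmatrix}$ is the coefficient vector of $\mathbf{x}^{\beta_j}(x_1-u_0)$ (extra polynomial $x_1-u_0$). It is assumed that the cosets of the monomials of $B_1$ form a linear basis of the $r$-dimensional quotient ring $\mathbb{C}[x_1,\dots,x_n]/\langle f_1,\dots,f_m\rangle$. Action matrix read-off: writing the Gauss–Jordan form of $\hat{\mathbf{C}}$ as $\begin{bmatrix}\mathbf{I}&\mathbf{G}\end{bmatrix}$ with rows of $\mathbf{G}$ indexed by the monomials of $\mathbf{b}_2$, let $\mathbf{C}'_{23}$ be the rows of $\mathbf{G}$ indexed by $B_r$; the $r\times r$ matrix $\mathbf{M}_f$ has $j$-th row equal to the $i$-th unit row vector if $x_1\mathbf{x}^{\beta_j}=\mathbf{x}^{\beta_i}\in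 B_1$, and otherwise equal to minus the row of $\mathbf{C}'_{23}$ indexed by $x_1\mathbf{x}^{\beta_j}\in B_r$. *)

theory Defs
  imports "HOL-Library.Poly_Mapping" "Jordan_Normal_Form.Gauss_Jordan_Elimination"
begin

(* Monomials x^beta in the variables x_1,...,x_n are exponent vectors  nat \<Rightarrow>\<^sub>0 nat
   (variable x_i has index i, 1 \<le> i \<le> n); multiplying monomials = adding exponents. *)
type_synonym monom = "nat \<Rightarrow>\<^sub>0 nat"
type_synonym cpoly = "monom \<Rightarrow>\<^sub>0 complex"

definition is_monom_in :: "nat \<Rightarrow> monom \<Rightarrow> bool" where
  "is_monom_in n \<beta> \<longleftrightarrow> Poly_Mapping.keys \<beta> \<subseteq> {1..n}"

definition polys_in :: "nat \<Rightarrow> cpoly set" where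
  "polys_in n = {p. \<forall>\<beta>\<in>Poly_Mapping.keys p. is_monom_in n \<beta>}"

definition mono :: "monom \<Rightarrow> cpoly" where
  "mono \<beta> = Poly_Mapping.single \<beta> 1"

definition x1m :: monom where "x1m = Poly_Mapping.single 1 1"
definition x1 :: cpoly where "x1 = mono x1m"

definition gen_ideal :: "nat \<Rightarrow> cpoly list \<Rightarrow> cpoly set" where
  "gen_ideal n fs = {\<Sum>i<length fs. g i * fs ! i | g. \<forall>i<length fs. g i \<in> polys_in n}"

definition quotient_basis :: "nat \<Rightarrow> cpoly list \<Rightarrow> monom list \<Rightarrow> bool" where
  "quotient_basis n fs bs \<longleftrightarrow> distinct bs \<and> (\<forall>\<beta>\<in>set bs. is_monom_in n \<beta>) \<and>
     (\<forall>p\<in>polys_in n. \<exists>c::nat \<Rightarrow> complex.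
        p - (\<Sum>j<length bs. Poly_Mapping.single (bs ! j) (c j)) \<in> gen_ideal n fs) \<and>
     (\<forall>c::nat \<Rightarrow> complex.
        (\<Sum>j<length bs. Poly_Mapping.single (bs ! j) (c j)) \<in> gen_ideal n fs
          \<longrightarrow> (\<forall>j<length bs. c j = 0))"

definition coeff_mat :: "cpoly list \<Rightarrow> monom list \<Rightarrow> complex mat" where
  "coeff_mat ps cs = mat (length ps) (length cs) (\<lambda>(i,j). Poly_Mapping.lookup (ps ! i) (cs ! j))"

definition upper_polys :: "cpoly list \<Rightarrow> (nat \<times> monom) list \<Rightarrow> cpoly list" where
  "upper_polys fs rws = map (\<lambda>(i,t). mono t * fs ! i) rws"

(* lower block: the j-th row is the coefficient vector of x^beta_j (x_1 - u_0);
   its b1-part is A21 - u0 I and its b2-part is A22, where A21, A22 are the coefficient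
   matrices of x_1 x^beta_j *)
definition lower_polys :: "monom list \<Rightarrow> cpoly list" where
  "lower_polys b1 = map (\<lambda>\<beta>. x1 * mono \<beta>) b1"

definition res_mat :: "cpoly list \<Rightarrow> (nat \<times> monom) list \<Rightarrow> monom list \<Rightarrow> monom list \<Rightarrow> complex \<Rightarrow> complex mat" where
  "res_mat fs rws b1 b2 u0 =
     coeff_mat (upper_polys fs rws @ map (\<lambda>\<beta>. mono \<beta> * (x1 - Poly_Mapping.single 0 u0)) b1) (b1 @ b2)"

definition hcat :: "complex mat \<Rightarrow> complex mat \<Rightarrow> complex mat" where
  "hcat A B = mat (dim_row A) (dim_col A + dim_col B)
     (\<lambda>(i,j). if j < dim_col A then A $$ (i,j) else B $$ (i, j - dim_col A))"

definition inv_m :: "complex mat \<Rightarrow> complex mat" where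
  "inv_m A = (THE B. B \<in> carrier_mat (dim_row A) (dim_row A) \<and>
                    A * B = 1\<^sub>m (dim_row A) \<and> B * A = 1\<^sub>m (dim_row A))"

definition Br :: "monom list \<Rightarrow> monom set" where
  "Br b1 = {x1m + \<beta> | \<beta>. \<beta> \<in> set b1} - set b1"

definition Be :: "monom list \<Rightarrow> monom list \<Rightarrow> monom set" where
  "Be b1 b2 = set b2 - Br b1"

definition idx :: "monom list \<Rightarrow> monom \<Rightarrow> nat" where
  "idx bs m = (THE k. k < length bs \<and> bs ! k = m)"

(* action matrix read-off from the Gauss-Jordan form R = [I G] of the template
   (columns indexed by b2 then b1; rws of G indexed by b2, C'_23 = rws indexed by B_r) *)
definition action_mat :: "monom list \<Rightarrow> monom list \<Rightarrow> complex mat \<Rightarrow> complex mat" where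
  "action_mat b1 b2 R = mat (length b1) (length b1) (\<lambda>(j,l).
     if x1m + b1 ! j \<in> set b1 then (if b1 ! l = x1m + b1 ! j then 1 else 0)
     else if x1m + b1 ! j \<in> Br b1 then - R $$ (idx b2 (x1m + b1 ! j), length b2 + l)
     else undefined)"

end

theory Submission
  imports Defs
begin

text \<open>
  Gauss-Jordan elimination turns \<open>[A12 A11]\<close> into \<open>P [A12 A11] = [P A12  P A11]\<close> with
  \<open>P\<close> invertible and the result in reduced row echelon form. The left block \<open>P A12\<close> is
  then itself in reduced row echelon form and invertible, hence the identity, which forces
  \<open>P = A12\<^sup>-\<^sup>1\<close>. For the action matrix, row \<open>j\<close> of the lower block is the coefficient
  vector of the single monomial \<open>x\<^sub>1 x\<^sup>\<beta>\<^sup>j\<close>, so with \<open>G = A12\<^sup>-\<^sup>1 A11\<close> row \<open>j\<close> of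
  \<open>A21 - A22 G\<close> is a unit row when \<open>x\<^sub>1 x\<^sup>\<beta>\<^sup>j \<in> B\<^sub>1\<close> and minus the row of \<open>G\<close>
  indexed by \<open>x\<^sub>1 x\<^sup>\<beta>\<^sup>j \<in> B\<^sub>r\<close> otherwise: exactly the read-off rule. Once the
  matrices are fixed the statement is pure linear algebra.
\<close>

lemma hcat_carrier:
  assumes "A \<in> carrier_mat nr na" and "B \<in> carrier_mat nr nb"
  shows "hcat A B \<in> carrier_mat nr (na + nb)"
  using assms by (auto simp: hcat_def)

lemma col_hcat:
  assumes "A \<in> carrier_mat nr na" and "B \<in> carrier_mat nr nb" and "j < na + nb"
  shows "col (hcat A B) j = (if j < na then col A j else col B (j - na))"
  using assms by (intro eq_vecI) (auto simp: hcat_def)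

lemma mult_hcat:
  assumes P: "P \<in> carrier_mat m nr" and A: "A \<in> carrier_mat nr na" and B: "B \<in> carrier_mat nr nb"
  shows "P * hcat A B = hcat (P * A) (P * B)"
proof (rule eq_matI)
  fix i j assume "i < dim_row (hcat (P * A) (P * B))" and "j < dim_col (hcat (P * A) (P * B))"
  then have "i < m" and j: "j < na + nb" using assms by (auto simp: hcat_def)
  then show "(P * hcat A B) $$ (i, j) = hcat (P * A) (P * B) $$ (i, j)"
    using assms col_hcat[OF A B j] by (auto simp: hcat_def)
qed (use assms in \<open>auto simp: hcat_def\<close>)

lemma row_echelon_form_hcat_left:
  assumes A: "A \<in> carrier_mat nr na" and B: "B \<in> carrier_mat nr nb"
    and ref: "row_echelon_form (hcat A B)"
  shows "row_echelon_form A"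
proof -
  have C: "hcat A B \<in> carrier_mat nr (na + nb)" using hcat_carrier[OF A B] .
  with ref obtain f where "pivot_fun (hcat A B) f (na + nb)"
    unfolding row_echelon_form_def by auto
  note p = pivot_funD[OF _ this, of nr]
  have entry: "i < nr \<Longrightarrow> j < na \<Longrightarrow> hcat A B $$ (i, j) = A $$ (i, j)" for i j
    using A by (simp add: hcat_def)
  have "pivot_fun A (\<lambda>i. min (f i) na) na"
  proof (rule pivot_funI)
    fix i assume i: "i < nr"
    show "min (f i) na \<le> na" by simp
    show "A $$ (i, j) = 0" if "j < min (f i) na" for j
      using p(2)[OF _ i, of j] entry[OF i, of j] that C by auto
    show "min (f i) na < min (f (Suc i)) na \<or> min (f (Suc i)) na = na" if "Suc i < nr"
      using p(3)[OF _ i that] C by auto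
    show "A $$ (i, min (f i) na) = 1" if "min (f i) na < na"
      using p(4)[OF _ i] entry[OF i] that C by auto
    show "A $$ (i', min (f i) na) = 0" if "min (f i) na < na" "i' < nr" "i' \<noteq> i" for i'
      using p(5)[OF _ i, of i'] entry[of i'] that C by auto
  qed (use A in auto)
  with A show ?thesis unfolding row_echelon_form_def by auto
qed

lemma row_echelon_form_right_invertible_eq_one:
  fixes A :: "'a :: field mat"
  assumes A: "A \<in> carrier_mat n n" and ref: "row_echelon_form A"
    and B: "B \<in> carrier_mat n n" and AB: "A * B = 1\<^sub>m n"
  shows "A = 1\<^sub>m n"
  using row_echelon_form_imp_1_or_0_row[OF A ref]
proof
  assume "0 < n \<and> row A (n - 1) = 0\<^sub>v n"
  then have last: "n - 1 < n" and zero_row: "row A (n - 1) = 0\<^sub>v n" by auto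
  have "1 = (A * B) $$ (n - 1, n - 1)" using AB last by simp
  also have "\<dots> = row A (n - 1) \<bullet> col B (n - 1)" using A B last by simp
  also have "\<dots> = 0" using zero_row B last by simp
  finally show ?thesis by simp
qed

lemma invertible_matE:
  fixes A :: "'a :: semiring_1 mat"
  assumes "invertible_mat A" and A: "A \<in> carrier_mat n n"
  obtains B where "B \<in> carrier_mat n n" "A * B = 1\<^sub>m n" "B * A = 1\<^sub>m n"
proof -
  from assms obtain B where AB: "A * B = 1\<^sub>m n" and BA: "B * A = 1\<^sub>m (dim_row B)"
    unfolding invertible_mat_def inverts_mat_def by auto
  from AB BA A have "B \<in> carrier_mat n n"
    by (metis carrier_matD carrier_matI index_mult_mat(2,3) index_one_mat(2,3))
  with AB BA that show ?thesis by auto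
qed

lemma inv_m_eqI:
  assumes A: "A \<in> carrier_mat n n" and B: "B \<in> carrier_mat n n"
    and AB: "A * B = 1\<^sub>m n" and BA: "B * A = 1\<^sub>m n"
  shows "inv_m A = B"
  unfolding inv_m_def
proof (rule the_equality)
  fix B' assume "B' \<in> carrier_mat (dim_row A) (dim_row A) \<and>
    A * B' = 1\<^sub>m (dim_row A) \<and> B' * A = 1\<^sub>m (dim_row A)"
  then have B': "B' \<in> carrier_mat n n" and "B' * A = 1\<^sub>m n" using A by auto
  have "B' = B' * (A * B)" using AB B' by simp
  also have "\<dots> = (B' * A) * B" using A B B' by (simp add: assoc_mult_mat)
  also have "\<dots> = B" using \<open>B' * A = 1\<^sub>m n\<close> B by simp
  finally show "B' = B" .
qed (use assms in auto)

lemma gauss_jordan_single_hcat_invertible: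
  assumes A: "A \<in> carrier_mat n n" and B: "B \<in> carrier_mat n k" and inv: "invertible_mat A"
  shows "gauss_jordan_single (hcat A B) = hcat (1\<^sub>m n) (inv_m A * B)"
proof -
  obtain A' where A': "A' \<in> carrier_mat n n" "A * A' = 1\<^sub>m n" "A' * A = 1\<^sub>m n"
    using invertible_matE[OF inv A] .
  have inv_m: "inv_m A = A'" using inv_m_eqI[OF A A'] .
  note gj = gauss_jordan_single[OF hcat_carrier[OF A B] refl]
  from gj(4) obtain P Q where gj_eq: "gauss_jordan_single (hcat A B) = P * hcat A B"
    and P: "P \<in> carrier_mat n n" and Q: "Q \<in> carrier_mat n n" and PQ: "P * Q = 1\<^sub>m n"
    by auto
  have gj_blocks: "gauss_jordan_single (hcat A B) = hcat (P * A) (P * B)"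
    using gj_eq mult_hcat[OF P A B] by simp
  have PA: "P * A \<in> carrier_mat n n" and PB: "P * B \<in> carrier_mat n k" using P A B by auto
  have ref: "row_echelon_form (P * A)"
    using row_echelon_form_hcat_left[OF PA PB gj(3)[unfolded gj_blocks]] .
  have right_inv: "(P * A) * (A' * Q) = 1\<^sub>m n"
  proof -
    have "(P * A) * (A' * Q) = P * (A * (A' * Q))"
      using P A A' Q by (meson assoc_mult_mat mult_carrier_mat)
    also have "A * (A' * Q) = (A * A') * Q"
      using A A' Q by (metis assoc_mult_mat)
    finally show ?thesis using A' PQ Q by simp
  qed
  have PA_one: "P * A = 1\<^sub>m n"
    using row_echelon_form_right_invertible_eq_one[OF PA ref _ right_inv] A'(1) Q by simp
  have "P = (P * A) * A'" using P A A' by (simp add: assoc_mult_mat)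
  with PA_one A' have "P = A'" by simp
  with gj_blocks PA_one inv_m show ?thesis by simp
qed

lemma lookup_lower_polys:
  "j < length b1 \<Longrightarrow>
   Poly_Mapping.lookup (lower_polys b1 ! j) c = (if c = x1m + b1 ! j then 1 else 0)"
  by (simp add: lower_polys_def x1_def mono_def mult_single lookup_single when_def)

lemma length_lower_polys [simp]: "length (lower_polys b1) = length b1"
  by (simp add: lower_polys_def)

lemma index_coeff_mat_lower_polys:
  "j < length b1 \<Longrightarrow> k < length cs \<Longrightarrow>
   coeff_mat (lower_polys b1) cs $$ (j, k) = (if cs ! k = x1m + b1 ! j then 1 else 0)"
  by (simp add: coeff_mat_def lookup_lower_polys)

lemma idx_nth: "distinct bs \<Longrightarrow> k < length bs \<Longrightarrow> idx bs (bs ! k) = k"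
  unfolding idx_def by (rule the_equality) (auto simp: nth_eq_iff_index_eq)

lemma index_coeff_mat_lower_polys_mult:
  assumes cs: "distinct cs" and G: "G \<in> carrier_mat (length cs) nc"
    and j: "j < length b1" and l: "l < nc"
  shows "(coeff_mat (lower_polys b1) cs * G) $$ (j, l) =
    (if x1m + b1 ! j \<in> set cs then G $$ (idx cs (x1m + b1 ! j), l) else 0)"
proof -
  have "(coeff_mat (lower_polys b1) cs * G) $$ (j, l) =
      (\<Sum>k<length cs. (if cs ! k = x1m + b1 ! j then 1 else 0) * G $$ (k, l))"
  proof -
    have "coeff_mat (lower_polys b1) cs \<in> carrier_mat (length b1) (length cs)"
      by (simp add: coeff_mat_def)
    then show ?thesis
      using G j l by (simp add: scalar_prod_def atLeast0LessThan index_coeff_mat_lower_polys)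
  qed
  also have "\<dots> = (if x1m + b1 ! j \<in> set cs then G $$ (idx cs (x1m + b1 ! j), l) else 0)"
  proof (cases "x1m + b1 ! j \<in> set cs")
    case True
    then obtain k0 where k0: "k0 < length cs" "cs ! k0 = x1m + b1 ! j"
      by (auto simp: in_set_conv_nth)
    have "\<forall>k<length cs. (cs ! k = x1m + b1 ! j) = (k = k0)"
      using cs k0 by (metis nth_eq_iff_index_eq)
    then have "(\<Sum>k<length cs. (if cs ! k = x1m + b1 ! j then 1 else 0) * G $$ (k, l)) =
        (\<Sum>k<length cs. if k = k0 then G $$ (k, l) else 0)"
      by (intro sum.cong) auto
    with True k0 idx_nth[OF cs k0(1)] show ?thesis by simp
  qed (auto simp: in_set_conv_nth intro!: sum.neutral)
  finally show ?thesis .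
qed

lemma action_mat_hcat_one:
  assumes distinct: "distinct (b1 @ b2)"
    and closed: "\<forall>\<beta>\<in>set b1. x1m + \<beta> \<in> set b1 \<union> set b2"
    and G: "G \<in> carrier_mat (length b2) (length b1)"
  shows "action_mat b1 b2 (hcat (1\<^sub>m (length b2)) G) =
    coeff_mat (lower_polys b1) b1 - coeff_mat (lower_polys b1) b2 * G"
proof (rule eq_matI)
  fix j l assume "j < dim_row (coeff_mat (lower_polys b1) b1 - coeff_mat (lower_polys b1) b2 * G)"
    and "l < dim_col (coeff_mat (lower_polys b1) b1 - coeff_mat (lower_polys b1) b2 * G)"
  then have j: "j < length b1" and l: "l < length b1"
    using G by (auto simp: coeff_mat_def)
  have b2: "distinct b2" and disj: "set b1 \<inter> set b2 = {}"
    using distinct by auto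
  note lower_b1 = index_coeff_mat_lower_polys[OF j l]
  note lower_b2 = index_coeff_mat_lower_polys_mult[OF b2 G j l]
  have diff: "(coeff_mat (lower_polys b1) b1 - coeff_mat (lower_polys b1) b2 * G) $$ (j, l) =
      coeff_mat (lower_polys b1) b1 $$ (j, l) - (coeff_mat (lower_polys b1) b2 * G) $$ (j, l)"
    using G j l by (simp add: coeff_mat_def)
  show "action_mat b1 b2 (hcat (1\<^sub>m (length b2)) G) $$ (j, l) =
      (coeff_mat (lower_polys b1) b1 - coeff_mat (lower_polys b1) b2 * G) $$ (j, l)"
  proof (cases "x1m + b1 ! j \<in> set b1")
    case True
    then have "x1m + b1 ! j \<notin> set b2" using disj by blast
    with True show ?thesis
      using j l diff lower_b1 lower_b2 by (simp add: action_mat_def)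
  next
    case False
    have "x1m + b1 ! j \<in> set b2" using False closed j by auto
    moreover have "x1m + b1 ! j \<in> Br b1" using False j unfolding Br_def by auto
    moreover have "idx b2 (x1m + b1 ! j) < length b2"
      using \<open>x1m + b1 ! j \<in> set b2\<close> by (metis in_set_conv_nth idx_nth[OF b2])
    moreover have "b1 ! l \<noteq> x1m + b1 ! j" using False l by (metis nth_mem)
    ultimately show ?thesis
      using False j l G diff lower_b1 lower_b2 by (simp add: action_mat_def hcat_def)
  qed
qed (use G in \<open>auto simp: action_mat_def coeff_mat_def\<close>)

theorem proposition3:
  fixes n m r :: nat
    and fs :: "cpoly list"
    and rws :: "(nat \<times> monom) list"
    and b1 b2 :: "monom list"
    and A11 A12 A21 A22 X Chat :: "complex mat"
  assumes n_pos: "1 \<le> n"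
    and f_len: "length fs = m"
    and f_polys: "\<forall>i<m. fs ! i \<in> polys_in n"
    and B_distinct: "distinct (b1 @ b2)"
    and B_monoms: "\<forall>\<beta>\<in>set b1 \<union> set b2. is_monom_in n \<beta>"
    and B1_def: "set b1 = {\<beta> \<in> set b1 \<union> set b2. x1m + \<beta> \<in> set b1 \<union> set b2}"
    and r_def: "length b1 = r"
    and basis: "quotient_basis n fs b1"
    and rows_ok: "\<forall>(i,t)\<in>set rws. i < m \<and> is_monom_in n t"
    and rows_distinct: "distinct rws"
    and rows_supp: "\<forall>p\<in>set (upper_polys fs rws). Poly_Mapping.keys p \<subseteq> set b1 \<union> set b2"
    and square: "dim_row (res_mat fs rws b1 b2 0) = dim_col (res_mat fs rws b1 b2 0)"
    and A11_def: "A11 = coeff_mat (upper_polys fs rws) b1"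
    and A12_def: "A12 = coeff_mat (upper_polys fs rws) b2"
    and A21_def: "A21 = coeff_mat (lower_polys b1) b1"
    and A22_def: "A22 = coeff_mat (lower_polys b1) b2"
    and A12_sq: "dim_row A12 = dim_col A12"
    and A12_inv: "invertible_mat A12"
    and X_def: "X = A21 - A22 * (inv_m A12 * A11)"
    and Chat_def: "Chat = hcat A12 A11"
  shows "gauss_jordan_single Chat = hcat (1\<^sub>m (length b2)) (inv_m A12 * A11)
         \<and> action_mat b1 b2 (gauss_jordan_single Chat) = X"
proof -
  have A12: "A12 \<in> carrier_mat (length b2) (length b2)"
    using A12_sq unfolding A12_def coeff_mat_def by auto
  have A11: "A11 \<in> carrier_mat (length b2) (length b1)"
    using A12_sq unfolding A11_def A12_def coeff_mat_def by auto
  have gj: "gauss_jordan_single Chat = hcat (1\<^sub>m (length b2)) (inv_m A12 * A11)"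
    unfolding Chat_def by (rule gauss_jordan_single_hcat_invertible[OF A12 A11 A12_inv])
  obtain A12' where "A12' \<in> carrier_mat (length b2) (length b2)"
    "A12 * A12' = 1\<^sub>m (length b2)" "A12' * A12 = 1\<^sub>m (length b2)"
    using invertible_matE[OF A12_inv A12] .
  with A11 have "inv_m A12 * A11 \<in> carrier_mat (length b2) (length b1)"
    using inv_m_eqI[OF A12] by simp
  moreover have "\<forall>\<beta>\<in>set b1. x1m + \<beta> \<in> set b1 \<union> set b2"
    using B1_def by blast
  ultimately have "action_mat b1 b2 (hcat (1\<^sub>m (length b2)) (inv_m A12 * A11)) = X"
    unfolding X_def A21_def A22_def by (intro action_mat_hcat_one[OF B_distinct])
  with gj show ?thesis by simp
qed

end
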